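(* Let $\mathbf{A}\in\mathbb{C}^{N\times N}$ be a nonzero matrix (the weighted adjacency matrix of a graph), and let $\lambda_{\max}$ denote an eigenvalue of $\mathbf{A}$ of largest magnitude, i.e. $|\lambda_{\max}|\ge|\lambda|$ for every eigenvalue $\lambda$ of $\mathbf{A}$. Let $\lambda_m,\lambda_n\in\mathbb{R}$ be two distinct real eigenvalues of $\mathbf{A}$ with corresponding eigenvectors $\mathbf{v}_m,\mathbf{v}_n$, normalized so that $\|\mathbf{v}_m\|_1=\|\mathbf{v}_n\|_1=1$. If $\lambda_m<\lambda_n$, then $\mathrm{TV}_G(\mathbf{v}_m)>\mathrm{TV}_G(\mathbf{v}_n)$.
   Context: For a graph signal $\mathbf{s}\in\mathbb{C}^N$, the total variation on the graph is $\mathrm{TV}_G(\mathbf{s})=\|\mathbf{s}-\mathbf{A}^{\mathrm{norm}}\mathbf{s}\|_1$, where $\mathbf{A}^{\mathrm{norm}}=\frac{1}{|\lambda_{\max}|}\mathbf{A}$ is the normalized adjacency matrix. *)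

theory Defs
  imports Complex_Main "Jordan_Normal_Form.Char_Poly"
begin

definition l1_norm :: "complex vec \<Rightarrow> real" where
  "l1_norm s = (\<Sum>i<dim_vec s. cmod (s $ i))"

definition normalized_adj :: "complex mat \<Rightarrow> complex \<Rightarrow> complex mat" where
  "normalized_adj A lmax = complex_of_real (1 / cmod lmax) \<cdot>\<^sub>m A"

definition TV_G :: "complex mat \<Rightarrow> complex \<Rightarrow> complex vec \<Rightarrow> real" where
  "TV_G A lmax s = l1_norm (s - normalized_adj A lmax *\<^sub>v s)"

end

theory Submission
  imports Defs
begin

text \<open>An eigenvector \<open>v\<close> for \<open>\<lambda>\<close> satisfies \<open>v - A_norm v = (1 - \<lambda>/|\<lambda>_max|) v\<close>, so its total
  variation is \<open>|1 - \<lambda>/|\<lambda>_max|| \<cdot> \<parallel>v\<parallel>_1\<close>. For real \<open>\<lambda>\<close> with \<open>|\<lambda>| \<le> |\<lambda>_max|\<close> the factor is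
  the nonnegative real \<open>1 - \<lambda>/|\<lambda>_max|\<close>, which is strictly decreasing in \<open>\<lambda>\<close>.\<close>

lemma smult_mat_mult_mat_vec:
  fixes A :: "'a::comm_ring mat"
  assumes "dim_col A = dim_vec v"
  shows "(k \<cdot>\<^sub>m A) *\<^sub>v v = k \<cdot>\<^sub>v (A *\<^sub>v v)"
  using assms
  by (intro eq_vecI) (auto simp: scalar_prod_def sum_distrib_left algebra_simps)

lemma l1_norm_smult: "l1_norm (c \<cdot>\<^sub>v v) = cmod c * l1_norm v"
  unfolding l1_norm_def by (simp add: norm_mult sum_distrib_left)

lemma TV_G_eigenvector:
  assumes "A \<in> carrier_mat N N" and "eigenvector A v l"
  shows "TV_G A lmax v = cmod (1 - complex_of_real (1 / cmod lmax) * l) * l1_norm v"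
proof -
  have v: "v \<in> carrier_vec N" and Av: "A *\<^sub>v v = l \<cdot>\<^sub>v v"
    using assms unfolding eigenvector_def by auto
  have "v - normalized_adj A lmax *\<^sub>v v = (1 - complex_of_real (1 / cmod lmax) * l) \<cdot>\<^sub>v v"
    unfolding normalized_adj_def
    using v assms(1) by (subst smult_mat_mult_mat_vec) (auto simp: Av algebra_simps)
  then show ?thesis
    unfolding TV_G_def by (simp add: l1_norm_smult)
qed

lemma TV_G_real_eigenvector:
  assumes "A \<in> carrier_mat N N" and "eigenvector A v (complex_of_real l)"
    and "l1_norm v = 1" and "\<bar>l\<bar> \<le> cmod lmax" and "cmod lmax > 0"
  shows "TV_G A lmax v = 1 - l / cmod lmax"
proof -
  have "1 - complex_of_real (1 / cmod lmax) * complex_of_real l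
        = complex_of_real (1 - l / cmod lmax)"
    by simp
  moreover have "1 - l / cmod lmax \<ge> 0"
    using assms(4,5) by (simp add: field_simps)
  ultimately show ?thesis
    using TV_G_eigenvector[OF assms(1,2)] assms(3) by (simp only: norm_of_real) simp
qed

lemma abs_real_eigenvalue_le_dominant:
  assumes "eigenvector A v (complex_of_real l)"
    and "\<forall>\<mu>. eigenvalue A \<mu> \<longrightarrow> cmod \<mu> \<le> cmod lmax"
  shows "\<bar>l\<bar> \<le> cmod lmax"
  using assms unfolding eigenvalue_def by fastforce

theorem theorem1:
  fixes A :: "complex mat" and N :: nat and lmax :: complex
    and lm ln :: real and vm vn :: "complex vec"
  assumes "A \<in> carrier_mat N N"
    and "A \<noteq> 0\<^sub>m N N"
    and "eigenvalue A lmax"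
    and "\<forall>l. eigenvalue A l \<longrightarrow> cmod l \<le> cmod lmax"
    and "lm \<noteq> ln"
    and "eigenvector A vm (complex_of_real lm)"
    and "eigenvector A vn (complex_of_real ln)"
    and "l1_norm vm = 1" and "l1_norm vn = 1"
    and "lm < ln"
  shows "TV_G A lmax vm > TV_G A lmax vn"
proof -
  have m: "\<bar>lm\<bar> \<le> cmod lmax" and n: "\<bar>ln\<bar> \<le> cmod lmax"
    using abs_real_eigenvalue_le_dominant assms(4,6,7) by blast+
  have pos: "cmod lmax > 0"
    using m n \<open>lm < ln\<close> by linarith
  have "TV_G A lmax vm = 1 - lm / cmod lmax" "TV_G A lmax vn = 1 - ln / cmod lmax"
    using TV_G_real_eigenvector assms(1,6,7,8,9) m n pos by blast+
  then show ?thesis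
    using \<open>lm < ln\<close> pos by (simp add: divide_strict_right_mono)
qed

end
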